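(* Let $t\ge 2$, let $n_1,\dots,n_t$ be positive integers, and let $G=K_{n_1,\dots,n_t}$ be the complete $t$-partite graph with partite sets $V_1,\dots,V_t$, $|V_i|=n_i$. Let $N_t=\{1,\dots,t\}$ and $f(I)=\sum_{i\in I}n_i$ for $I\subseteq N_t$. Let $p$ be a positive integer with $f(N_t)>p$. Then $|I_D|\le t-2$ for every $\gamma_p(G)$-set $D$ with $f(I_D)<p$.
   Context: A set $S\subseteq V(G)$ is a $p$-dominating set of $G$ if every vertex $v\in V(G)\setminus S$ has at least $p$ neighbors in $S$. The $p$-domination number $\gamma_p(G)$ is the minimum cardinality of a $p$-dominating set of $G$, and a $\gamma_p(G)$-set is a $p$-dominating set of cardinality $\gamma_p(G)$. For $D\subseteq V(G)$ write $D_i=V_i\cap D$ for $i\in N_t$ and $I_D=\{i\in N_t: |D_i|=|V_i|\}$. *)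

theory Defs
  imports Main
begin

text \<open>A graph is given by a finite vertex set V and a symmetric irreflexive adjacency
relation E.\<close>

definition p_dominating :: "'a set \<Rightarrow> ('a \<Rightarrow> 'a \<Rightarrow> bool) \<Rightarrow> nat \<Rightarrow> 'a set \<Rightarrow> bool" where
  "p_dominating V E p S \<longleftrightarrow> S \<subseteq> V \<and> (\<forall>v \<in> V - S. card {u \<in> S. E v u} \<ge> p)"

definition gamma_p :: "'a set \<Rightarrow> ('a \<Rightarrow> 'a \<Rightarrow> bool) \<Rightarrow> nat \<Rightarrow> nat" where
  "gamma_p V E p = Min (card ` {S. p_dominating V E p S})"

definition gamma_p_set :: "'a set \<Rightarrow> ('a \<Rightarrow> 'a \<Rightarrow> bool) \<Rightarrow> nat \<Rightarrow> 'a set \<Rightarrow> bool" where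
  "gamma_p_set V E p S \<longleftrightarrow> p_dominating V E p S \<and> card S = gamma_p V E p"

text \<open>Complete t-partite graph K_{n_1,...,n_t}: vertices are pairs (i,j) with
1 \<le> i \<le> t and j < n i; the partite set V_i consists of the pairs with first component i;
two vertices are adjacent iff they lie in different partite sets.\<close>

definition part :: "(nat \<Rightarrow> nat) \<Rightarrow> nat \<Rightarrow> (nat \<times> nat) set" where
  "part n i = {(i, j) | j. j < n i}"

definition cmp_vertices :: "nat \<Rightarrow> (nat \<Rightarrow> nat) \<Rightarrow> (nat \<times> nat) set" where
  "cmp_vertices t n = (\<Union>i\<in>{1..t}. part n i)"

definition cmp_adj :: "nat \<times> nat \<Rightarrow> nat \<times> nat \<Rightarrow> bool" where
  "cmp_adj u v \<longleftrightarrow> fst u \<noteq> fst v"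

text \<open>I_D = {i in N_t : |D_i| = |V_i|} where D_i = V_i \<inter> D.\<close>

definition full_parts :: "nat \<Rightarrow> (nat \<Rightarrow> nat) \<Rightarrow> (nat \<times> nat) set \<Rightarrow> nat set" where
  "full_parts t n D = {i \<in> {1..t}. card (part n i \<inter> D) = card (part n i)}"

end

theory Submission
  imports Defs
begin

text \<open>If at least \<open>t - 1\<close> partite sets lie entirely in \<open>D\<close> while \<open>D\<close> contains fewer than \<open>p\<close>
vertices in them, then \<open>D\<close> cannot be everything (the graph has more than \<open>p\<close> vertices), so
exactly one partite set \<open>V\<^sub>j\<close> is not full. A vertex of \<open>V\<^sub>j\<close> outside \<open>D\<close> has all its
\<open>D\<close>-neighbours in the full partite sets, hence fewer than \<open>p\<close> of them, contradicting
\<open>p\<close>-domination.\<close>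

lemma part_eq_image: "part n i = Pair i ` {..<n i}"
  unfolding part_def by auto

lemma finite_part [simp]: "finite (part n i)"
  unfolding part_eq_image by simp

lemma card_part [simp]: "card (part n i) = n i"
  unfolding part_eq_image by (simp add: card_image inj_on_def)

lemma fst_part: "v \<in> part n i \<Longrightarrow> fst v = i"
  unfolding part_def by auto

lemma ex_notin_if_not_full_part:
  assumes "i \<in> {1..t}" "i \<notin> full_parts t n D"
  obtains v where "v \<in> part n i" "v \<notin> D"
proof -
  have "part n i \<inter> D \<noteq> part n i"
    using assms unfolding full_parts_def by auto
  then show ?thesis using that by blast
qed

lemma subset_eq_remove_if_card_ge:
  assumes "finite A" "B \<subseteq> A" "B \<noteq> A" "card B \<ge> card A - 1"
  obtains j where "j \<in> A" "B = A - {j}"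
proof -
  obtain j where j: "j \<in> A" "j \<notin> B" using assms(2,3) by blast
  then have "B \<subseteq> A - {j}" "card (A - {j}) = card A - 1"
    using assms by (auto simp: card_Diff_singleton)
  then have "B = A - {j}"
    using assms by (metis card_seteq finite_Diff)
  with j that show ?thesis by blast
qed

lemma cmp_neighbours_in:
  assumes "D \<subseteq> cmp_vertices t n" "v \<in> part n j"
  shows "{u \<in> D. cmp_adj v u} = (\<Union>i\<in>{1..t} - {j}. part n i \<inter> D)"
proof -
  have "u \<in> part n (fst u)" if "u \<in> cmp_vertices t n" for u
    using that unfolding cmp_vertices_def by (auto dest: fst_part)
  then show ?thesis
    using assms fst_part[OF assms(2)]
    unfolding cmp_vertices_def cmp_adj_def by (fastforce dest: fst_part)
qed

lemma p_le_card_outside_part: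
  assumes "p_dominating (cmp_vertices t n) cmp_adj p D"
    and "j \<in> {1..t}" "v \<in> part n j" "v \<notin> D"
  shows "p \<le> (\<Sum>i\<in>{1..t} - {j}. card (part n i \<inter> D))"
proof -
  have D: "D \<subseteq> cmp_vertices t n" and "v \<in> cmp_vertices t n"
    using assms unfolding p_dominating_def cmp_vertices_def by auto
  then have "p \<le> card {u \<in> D. cmp_adj v u}"
    using assms(1,4) unfolding p_dominating_def by blast
  also have "\<dots> = card (\<Union>i\<in>{1..t} - {j}. part n i \<inter> D)"
    using cmp_neighbours_in[OF D assms(3)] by simp
  also have "\<dots> \<le> (\<Sum>i\<in>{1..t} - {j}. card (part n i \<inter> D))"
    by (rule card_UN_le) simp
  finally show ?thesis .
qed

theorem lemma3:
  fixes t p :: nat and n :: "nat \<Rightarrow> nat" and D :: "(nat \<times> nat) set"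
  assumes "t \<ge> 2"
    and "\<forall>i\<in>{1..t}. n i > 0"
    and "p > 0"
    and "(\<Sum>i\<in>{1..t}. n i) > p"
    and "gamma_p_set (cmp_vertices t n) cmp_adj p D"
    and "(\<Sum>i\<in>full_parts t n D. n i) < p"
  shows "card (full_parts t n D) \<le> t - 2"
proof (rule ccontr)
  define F where "F = full_parts t n D"
  assume "\<not> card (full_parts t n D) \<le> t - 2"
  then have "card F \<ge> card {1..t} - 1" unfolding F_def by simp
  moreover have "F \<subseteq> {1..t}" unfolding F_def full_parts_def by auto
  moreover have "F \<noteq> {1..t}" using assms(4,6) unfolding F_def by auto
  ultimately obtain j where j: "j \<in> {1..t}" and F: "F = {1..t} - {j}"
    using subset_eq_remove_if_card_ge by (metis finite_atLeastAtMost)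
  obtain v where "v \<in> part n j" "v \<notin> D"
    using ex_notin_if_not_full_part j F unfolding F_def by blast
  then have "p \<le> (\<Sum>i\<in>F. card (part n i \<inter> D))"
    using p_le_card_outside_part assms(5) j F unfolding gamma_p_set_def by blast
  also have "\<dots> = (\<Sum>i\<in>F. n i)"
    unfolding F_def full_parts_def by simp
  finally show False using assms(6) unfolding F_def by simp
qed

end
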